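(* In the setting of the context, with $V_{\mathbf{i}}=\sum_{\mathbf{n}=\mathbf{0}}^{\mathbf{i}}\mathscr{D}_{\mathbf{n},\mathbf{i}}V^{\mathbf{n}}$ where $\mathscr{D}_{\mathbf{n},\mathbf{i}}=\frac{(-1)^{|\mathbf{n}|-|\mathbf{i}|}}{(|\mathbf{i}|+|\mathbf{n}|+\omega^\star)_{|\mathbf{i}|-|\mathbf{n}|}}\prod_{p=1}^N\binom{\ell_p-n_p}{\ell_p-i_p}(|\mathbf{i}|_1^{p-1}+|\mathbf{n}|_1^{p}+|\boldsymbol{\ell}|_{p+1}^N-a_p+\omega^\star)_{i_p-n_p}$, the inverse change of basis is: for every $\mathbf{n}$ with $0\le n_p\le\ell_p$, \[ V^{\mathbf{n}}=\sum_{\mathbf{i}=\mathbf{0}}^{\mathbf{n}}\overline{\mathscr{D}}_{\mathbf{i},\mathbf{n}}V_{\mathbf{i}},\qquad \overline{\mathscr{D}}_{\mathbf{i},\mathbf{n}}=\frac{1}{(2|\mathbf{i}|+\omega^\star+1)_{|\mathbf{n}|-|\mathbf{i}|}}\prod_{p=1}^N\binom{\ell_p-i_p}{\ell_p-n_p}\big(|\mathbf{n}|_1^{p-1}+|\mathbf{i}|_1^{p}+|\boldsymbol{\ell}|_{p+1}^N-a_p+\omega^\star\big)_{n_p-i_p}. \]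
   Context: Notation: for $N$-tuples of integers, $|\mathbf{n}|_j^k=\sum_{p=j}^k n_p$ (equal to $0$ if $j>k$), $|\mathbf{n}|=|\mathbf{n}|_1^N$, $\mathbf{0}=(0,\dots,0)$; $(x)_k=x(x+1)\cdots(x+k-1)$, $(x)_0=1$. A sum $\sum_{\mathbf{n}=\mathbf{a}}^{\mathbf{b}}$ means the sum over all $\mathbf{n}$ with $a_p\le n_p\le b_p$ for every $p$. Setting: $N\ge1$, $\boldsymbol{\ell}=(\ell_1,\dots,\ell_N)$ nonnegative integers, $\mathcal{V}=\mathbb{C}^{\ell_1+1}\otimes\cdots\otimes\mathbb{C}^{\ell_N+1}$ with basis $V^{\mathbf{n}}$, $0\le n_p\le\ell_p$. Scalars $\theta_0,\theta_0^\star,h,h^\star,\omega,\omega^\star,a_1,\dots,a_N\in\mathbb{C}$ satisfy the standing constraints: $h,h^\star\neq0$; $\omega,\omega^\star\notin\{-2|\boldsymbol{\ell}|+1,\dots,-1\}$; for each $i$, none of $a_i,\ a_i+\omega-\omega^\star,\ a_i-|\boldsymbol{\ell}|-\omega^\star,\ a_i+|\boldsymbol{\ell}|+\omega$ lies in $\{-\ell_i,\dots,-1\}$; and with $S^\pm(\ell,a)=\{\pm(a+k+\tfrac12(\omega-\omega^\star)):k=1,\dots,\ell\}$, for all $i,j$ and signs, $S^{\epsilon_i}(\ell_i,a_i)$ and $S^{\epsilon_j}(\ell_j,a_j)$ are in general position (one contains the other or their union is not a string). *)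

theory Defs
  imports "HOL-Analysis.Analysis" "HOL-Library.Function_Algebras"
begin

text \<open>N-tuples are functions nat => nat, relevant on indices 1..N.
  psum n j k is the partial sum |n|_j^k (0 if j > k).\<close>
definition psum :: "(nat \<Rightarrow> nat) \<Rightarrow> nat \<Rightarrow> nat \<Rightarrow> nat" where
  "psum n j k = (\<Sum>p\<in>{j..k}. n p)"

definition box :: "nat \<Rightarrow> (nat \<Rightarrow> nat) \<Rightarrow> (nat \<Rightarrow> nat) \<Rightarrow> (nat \<Rightarrow> nat) set" where
  "box N a b = Pi\<^sub>E {1..N} (\<lambda>p. {a p..b p})"

definition is_string :: "complex set \<Rightarrow> bool" where
  "is_string S \<longleftrightarrow> (\<exists>c (m::nat). S = {c + of_nat k | k. k \<le> m})"

definition Sset :: "complex \<Rightarrow> nat \<Rightarrow> complex \<Rightarrow> complex \<Rightarrow> complex \<Rightarrow> complex set" where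
  "Sset eps l a \<omega> \<omega>s = {eps * (a + of_nat k + (\<omega> - \<omega>s) / 2) | k. 1 \<le> k \<and> k \<le> l}"

definition general_position :: "complex set \<Rightarrow> complex set \<Rightarrow> bool" where
  "general_position S T \<longleftrightarrow> S \<subseteq> T \<or> T \<subseteq> S \<or> \<not> is_string (S \<union> T)"

definition Dcoef :: "nat \<Rightarrow> (nat \<Rightarrow> nat) \<Rightarrow> (nat \<Rightarrow> complex) \<Rightarrow> complex
    \<Rightarrow> (nat \<Rightarrow> nat) \<Rightarrow> (nat \<Rightarrow> nat) \<Rightarrow> complex" where
  "Dcoef N l a \<omega>s n i =
     (-1) ^ (psum i 1 N - psum n 1 N)
     / pochhammer (of_nat (psum i 1 N + psum n 1 N) + \<omega>s) (psum i 1 N - psum n 1 N)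
     * (\<Prod>p\<in>{1..N}. of_nat ((l p - n p) choose (l p - i p))
          * pochhammer (of_nat (psum i 1 (p - 1) + psum n 1 p + psum l (p + 1) N) - a p + \<omega>s)
                       (i p - n p))"

definition Dbar :: "nat \<Rightarrow> (nat \<Rightarrow> nat) \<Rightarrow> (nat \<Rightarrow> complex) \<Rightarrow> complex
    \<Rightarrow> (nat \<Rightarrow> nat) \<Rightarrow> (nat \<Rightarrow> nat) \<Rightarrow> complex" where
  "Dbar N l a \<omega>s i n =
     1 / pochhammer (of_nat (2 * psum i 1 N) + \<omega>s + 1) (psum n 1 N - psum i 1 N)
     * (\<Prod>p\<in>{1..N}. of_nat ((l p - i p) choose (l p - n p))
          * pochhammer (of_nat (psum n 1 (p - 1) + psum i 1 p + psum l (p + 1) N) - a p + \<omega>s)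
                       (n p - i p))"

text \<open>The space V = C^(l_1+1) (x) ... (x) C^(l_N+1) is modelled by its coordinate
  functions (nat => nat) => complex on index tuples; the standard basis vector V^n
  is the indicator of n.\<close>
definition Vbasis :: "(nat \<Rightarrow> nat) \<Rightarrow> ((nat \<Rightarrow> nat) \<Rightarrow> complex)" where
  "Vbasis n = (\<lambda>m. if m = n then 1 else 0)"

definition cscale :: "complex \<Rightarrow> ((nat \<Rightarrow> nat) \<Rightarrow> complex) \<Rightarrow> ((nat \<Rightarrow> nat) \<Rightarrow> complex)" where
  "cscale c v = (\<lambda>m. c * v m)"

definition Vnew :: "nat \<Rightarrow> (nat \<Rightarrow> nat) \<Rightarrow> (nat \<Rightarrow> complex) \<Rightarrow> complex
    \<Rightarrow> (nat \<Rightarrow> nat) \<Rightarrow> ((nat \<Rightarrow> nat) \<Rightarrow> complex)" where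
  "Vnew N l a \<omega>s i = (\<Sum>n\<in>box N (\<lambda>_. 0) i. cscale (Dcoef N l a \<omega>s n i) (Vbasis n))"

end

theory Submission
  imports Defs
begin

text \<open>
  Evaluating both sides at an index m reduces the theorem to the orthogonality relation
  sum_{m <= i <= n} Dbar(i,n) Dcoef(m,i) = [m = n].
  With d_p = |l|_{p+1}^N - a_p + omega*, each product Dbar(i,n) Dcoef(m,i) is a factor depending
  on i only through s = |i|, times a constant, times a chain weight made of binomials and the
  Pochhammer weights from m to i and from i to n. Summed over the level set |i| = s, the chain
  weights give binom(|n| - |m|, s - |m|) times the Pochhammer weight from m to n: this is an
  induction on N whose step is a Pochhammer analogue of Vandermonde's convolution. What is left
  is sum_k binom(K,k) (-1)^k / ((x+k)_k (x+2k+1)_{K-k}) with x = 2|m| + omega* and K = |n| - |m|,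
  which telescopes to 0 for K >= 1.
\<close>

lemma pochhammer_nonzero:
  fixes x :: "'a::idom"
  assumes "\<And>j. j < n \<Longrightarrow> x + of_nat j \<noteq> 0"
  shows "pochhammer x n \<noteq> 0"
  using assms by (simp add: pochhammer_prod)

lemma sum_choose_Suc:
  fixes g :: "nat \<Rightarrow> 'a::comm_semiring_1"
  shows "(\<Sum>k\<le>Suc K. of_nat (Suc K choose k) * g k) = (\<Sum>k\<le>K. of_nat (K choose k) * (g k + g (Suc k)))"
proof -
  have "(\<Sum>k\<le>Suc K. of_nat (Suc K choose k) * g k)
      = g 0 + (\<Sum>k\<le>K. of_nat (K choose Suc k) * g (Suc k)) + (\<Sum>k\<le>K. of_nat (K choose k) * g (Suc k))"
    by (subst sum.atMost_Suc_shift) (simp add: sum.distrib algebra_simps)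
  also have "g 0 + (\<Sum>k\<le>K. of_nat (K choose Suc k) * g (Suc k)) = (\<Sum>k\<le>Suc K. of_nat (K choose k) * g k)"
    by (subst sum.atMost_Suc_shift) simp
  also have "\<dots> = (\<Sum>k\<le>K. of_nat (K choose k) * g k)"
    by (simp add: binomial_eq_0)
  finally show ?thesis by (simp add: sum.distrib algebra_simps)
qed

text \<open>The binomial coefficient \<open>M choose (j - k)\<close>, taken to vanish for \<open>j < k\<close>
  instead of reading the truncated difference \<open>j - k = 0\<close>.\<close>
definition choose_shift :: "nat \<Rightarrow> nat \<Rightarrow> nat \<Rightarrow> nat" where
  "choose_shift M j k = (if k \<le> j then M choose (j - k) else 0)"

lemma choose_shift_Suc:
  "of_nat (choose_shift M (Suc j) k) * (of_nat (Suc j) - of_nat k)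
     = (of_nat (choose_shift M j k) * (of_nat M + of_nat k - of_nat j) :: 'a::comm_ring_1)"
proof (cases "k \<le> j")
  case True
  then obtain q where q: "j = k + q" using le_Suc_ex by blast
  have "Suc q * (M choose Suc q) = (M - q) * (M choose q)"
    by (metis Suc_times_binomial binomial_absorb_comp diff_Suc_1 times_binomial_minus1_eq zero_less_Suc)
  then have "of_nat (Suc q) * of_nat (M choose Suc q) = (of_nat (M - q) :: 'a) * of_nat (M choose q)"
    by (metis of_nat_mult)
  then show ?thesis
    using q by (cases "q \<le> M") (simp_all add: choose_shift_def Suc_diff_le of_nat_diff binomial_eq_0 algebra_simps)
next
  case False
  then show ?thesis by (cases "k = Suc j") (auto simp: choose_shift_def)
qed

lemma pochhammer_convolution_step:
  fixes e :: "'a::comm_ring_1" and M :: nat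
  defines "h K j k \<equiv> of_nat (choose_shift M j k) * pochhammer (e - of_nat k) k * pochhammer (e + of_nat M) (K - k)"
  assumes "k \<le> K"
  shows "h (Suc K) (Suc j) k + h (Suc K) (Suc j) (Suc k)
     = (e + of_nat M - of_nat (Suc j) + of_nat K) * h K (Suc j) k + (e + of_nat M - of_nat (Suc j)) * h K j k"
proof -
  let ?c = "\<lambda>j. of_nat (choose_shift M j k) :: 'a"
  have rec_k: "pochhammer (e - of_nat (Suc k)) (Suc k) = (e - of_nat k - 1) * pochhammer (e - of_nat k) k"
    by (simp add: pochhammer_rec algebra_simps)
  have rec_K: "pochhammer (e + of_nat M) (Suc K - k) = pochhammer (e + of_nat M) (K - k) * (e + of_nat M + of_nat (K - k))"
    using assms(2) by (simp add: Suc_diff_le pochhammer_rec')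
  have "choose_shift M (Suc j) (Suc k) = choose_shift M j k"
    by (simp add: choose_shift_def)
  then have "h (Suc K) (Suc j) k + h (Suc K) (Suc j) (Suc k)
      = ?c (Suc j) * pochhammer (e - of_nat k) k * (pochhammer (e + of_nat M) (K - k) * (e + of_nat M + of_nat (K - k)))
        + ?c j * ((e - of_nat k - 1) * pochhammer (e - of_nat k) k) * pochhammer (e + of_nat M) (K - k)"
    unfolding h_def by (simp only: rec_k rec_K diff_Suc_Suc)
  also have "\<dots> = pochhammer (e - of_nat k) k * pochhammer (e + of_nat M) (K - k) *
          (?c (Suc j) * (e + of_nat M + of_nat K - of_nat k) + ?c j * (e - of_nat k - 1))"
    using assms(2) by (simp add: of_nat_diff algebra_simps)
  also have "?c (Suc j) * (e + of_nat M + of_nat K - of_nat k) + ?c j * (e - of_nat k - 1)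
      = (e + of_nat M - of_nat (Suc j) + of_nat K) * ?c (Suc j) + (e + of_nat M - of_nat (Suc j)) * ?c j"
    using choose_shift_Suc[of M j k, where 'a='a] by (simp add: algebra_simps)
  finally show ?thesis by (simp add: h_def algebra_simps)
qed

lemma choose_pochhammer_Pascal:
  fixes u :: "'a::comm_ring_1"
  shows "(u + of_nat K) * (of_nat (L choose Suc j) * pochhammer u K) + u * (of_nat (L choose j) * pochhammer (u + 1) K)
       = of_nat (Suc L choose Suc j) * pochhammer u (Suc K)"
proof -
  have A: "of_nat (L choose Suc j) * pochhammer u (Suc K) = (u + of_nat K) * (of_nat (L choose Suc j) * pochhammer u K)"
    by (simp add: pochhammer_rec' algebra_simps)
  have B: "of_nat (L choose j) * pochhammer u (Suc K) = u * (of_nat (L choose j) * pochhammer (u + 1) K)"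
    by (simp add: pochhammer_rec algebra_simps)
  have "of_nat (Suc L choose Suc j) * pochhammer u (Suc K)
      = of_nat (L choose Suc j) * pochhammer u (Suc K) + of_nat (L choose j) * pochhammer u (Suc K)"
    by (simp add: distrib_right)
  then show ?thesis
    by (simp only: A B)
qed

lemma sum_choose_pochhammer_convolution:
  fixes e :: "'a::comm_ring_1" and M :: nat
  shows "(\<Sum>k\<le>K. of_nat (K choose k) * (of_nat (choose_shift M j k) * pochhammer (e - of_nat k) k * pochhammer (e + of_nat M) (K - k)))
       = of_nat ((M + K) choose j) * pochhammer (e + of_nat M - of_nat j) K"
proof (induction K arbitrary: j)
  case 0
  then show ?case by (simp add: choose_shift_def)
next
  case (Suc K j)
  show ?case
  proof (cases j)
    case 0
    then show ?thesis by (subst sum.atMost_Suc_shift) (simp add: choose_shift_def)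
  next
    case (Suc j')
    define h where "h K j k = of_nat (choose_shift M j k) * pochhammer (e - of_nat k) k * pochhammer (e + of_nat M) (K - k)"
      for K j k
    let ?u = "e + of_nat M - of_nat j"
    have "(\<Sum>k\<le>Suc K. of_nat (Suc K choose k) * h (Suc K) j k)
        = (\<Sum>k\<le>K. of_nat (K choose k) * (h (Suc K) j k + h (Suc K) j (Suc k)))"
      by (rule sum_choose_Suc)
    also have "\<dots> = (\<Sum>k\<le>K. (?u + of_nat K) * (of_nat (K choose k) * h K j k) + ?u * (of_nat (K choose k) * h K j' k))"
    proof -
      have "h (Suc K) j k + h (Suc K) j (Suc k) = (?u + of_nat K) * h K j k + ?u * h K j' k" if "k \<le> K" for k
        using that unfolding Suc h_def by (rule pochhammer_convolution_step)
      then show ?thesis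
        by (intro sum.cong refl) (simp only: atMost_iff, simp add: algebra_simps)
    qed
    also have "\<dots> = (?u + of_nat K) * (of_nat ((M + K) choose j) * pochhammer ?u K)
        + ?u * (of_nat ((M + K) choose j') * pochhammer (e + of_nat M - of_nat j') K)"
      by (simp add: sum.distrib sum_distrib_left[symmetric] Suc.IH[unfolded h_def[symmetric]])
    also have "\<dots> = of_nat ((M + Suc K) choose j) * pochhammer ?u (Suc K)"
    proof -
      have "?u + 1 = e + of_nat M - of_nat j'"
        using Suc by simp
      from choose_pochhammer_Pascal[of ?u K "M + K" j', unfolded this]
      show ?thesis
        unfolding Suc by (simp only: add_Suc_right)
    qed
    finally show ?thesis by (simp add: h_def)
  qed
qed

text \<open>The convolution after the substitutions y = lo + k and e = s + r + c.\<close>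

lemma sum_choose_pochhammer_convolution_shifted:
  fixes c :: "'a::comm_ring_1"
  assumes "lo \<le> hi" and "r + lo \<le> s"
  shows "(\<Sum>y\<in>{lo..hi}. (if y \<le> s \<and> r \<le> s - y then of_nat (M choose (s - y - r)) else 0)
           * (of_nat ((hi - lo) choose (y - lo)) * pochhammer (of_nat (s - y + (r + lo)) + c) (y - lo)
              * pochhammer (of_nat (M + r + s) + c) (hi - y)))
       = of_nat ((M + (hi - lo)) choose (s - (r + lo))) * pochhammer (of_nat (M + r + (r + lo)) + c) (hi - lo)"
proof -
  define K where "K = hi - lo"
  define j where "j = s - (r + lo)"
  define e where "e = of_nat (s + r) + c"
  have summand: "(if lo + k \<le> s \<and> r \<le> s - (lo + k) then of_nat (M choose (s - (lo + k) - r)) else 0)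
           * (of_nat (K choose (lo + k - lo)) * pochhammer (of_nat (s - (lo + k) + (r + lo)) + c) (lo + k - lo)
              * pochhammer (of_nat (M + r + s) + c) (hi - (lo + k)))
      = of_nat (K choose k) * (of_nat (choose_shift M j k) * pochhammer (e - of_nat k) k * pochhammer (e + of_nat M) (K - k))"
    for k
  proof (cases "k \<le> j")
    case True
    have cond: "lo + k \<le> s \<and> r \<le> s - (lo + k)" and "s - (lo + k) - r = j - k"
      using True assms(2) unfolding j_def by linarith+
    moreover have "of_nat (s - (lo + k) + (r + lo)) + c = e - of_nat k"
      using True assms(2) by (simp add: e_def j_def of_nat_diff)
    moreover have "of_nat (M + r + s) + c = e + of_nat M"
      by (simp add: e_def)
    moreover have "hi - (lo + k) = K - k" and "lo + k - lo = k"
      by (simp_all add: K_def)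
    ultimately show ?thesis
      using True by (simp only: if_P) (simp add: choose_shift_def mult_ac)
  next
    case False
    then have "\<not> (lo + k \<le> s \<and> r \<le> s - (lo + k))"
      unfolding j_def by linarith
    with False show ?thesis
      by (simp only: if_not_P mult_zero_left) (simp add: choose_shift_def)
  qed
  have "e + of_nat M - of_nat j = of_nat (M + r + (r + lo)) + c"
    using assms(2) by (simp add: e_def j_def of_nat_diff)
  moreover have "(\<Sum>y\<in>{lo..hi}. (if y \<le> s \<and> r \<le> s - y then of_nat (M choose (s - y - r)) else 0)
           * (of_nat ((hi - lo) choose (y - lo)) * pochhammer (of_nat (s - y + (r + lo)) + c) (y - lo)
              * pochhammer (of_nat (M + r + s) + c) (hi - y)))
      = (\<Sum>k\<le>K. of_nat (K choose k)
           * (of_nat (choose_shift M j k) * pochhammer (e - of_nat k) k * pochhammer (e + of_nat M) (K - k)))"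
    unfolding sum.atLeastAtMost_shift_0[OF assms(1)] atLeast0AtMost comp_def K_def[symmetric]
    by (intro sum.cong refl summand)
  ultimately show ?thesis
    unfolding sum_choose_pochhammer_convolution K_def j_def by (simp only:)
qed

lemma pochhammer_split_middle:
  fixes x :: "'a::comm_semiring_1"
  assumes "k \<le> K"
  shows "pochhammer (x + of_nat k) k * (x + of_nat (2 * k)) * pochhammer (x + of_nat (2 * k) + 1) (K - k)
       = pochhammer (x + of_nat k) (Suc K)"
proof -
  have "pochhammer (x + of_nat k) (k + Suc (K - k))
      = pochhammer (x + of_nat k) k * pochhammer (x + of_nat (2 * k)) (Suc (K - k))"
    by (simp only: pochhammer_product') (simp add: mult_2 add.assoc)
  then show ?thesis
    using assms by (simp add: pochhammer_rec mult.assoc)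
qed

lemma choose_Suc_weighted:
  fixes x :: "'a::comm_semiring_1"
  shows "of_nat (Suc K choose Suc k) * (x + of_nat (2 * Suc k))
       = of_nat (K choose Suc k) * (x + of_nat (Suc k)) + of_nat (K choose k) * (x + of_nat (Suc k) + of_nat (Suc K))"
proof -
  have "(Suc K choose Suc k) * (2 * Suc k) = (K choose Suc k) * Suc k + (K choose k) * (Suc k + Suc K)"
    using Suc_times_binomial_eq[of K k] by (simp add: algebra_simps)
  then have "of_nat (Suc K choose Suc k) * of_nat (2 * Suc k)
      = of_nat (K choose Suc k) * of_nat (Suc k) + (of_nat (K choose k) * (of_nat (Suc k) + of_nat (Suc K)) :: 'a)"
    by (metis of_nat_add of_nat_mult)
  then have "of_nat (Suc K choose Suc k) * (x + of_nat (2 * Suc k))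
      = of_nat (Suc K choose Suc k) * x + (of_nat (K choose Suc k) * of_nat (Suc k)
        + of_nat (K choose k) * (of_nat (Suc k) + of_nat (Suc K)))"
    by (simp only: distrib_left)
  then show ?thesis
    by (simp add: algebra_simps)
qed

text \<open>Multiplying numerator and denominator by x + 2(k + 1) turns the denominator into a single
  Pochhammer symbol; Pascal's rule then splits the numerator into the two telescoping terms.\<close>

lemma alternating_term_telescoping:
  fixes x :: "'a::field"
  assumes "k \<le> K" and nonzero: "\<And>j. 0 < j \<Longrightarrow> j \<le> 2 * K + 1 \<Longrightarrow> x + of_nat j \<noteq> 0"
  defines "A i \<equiv> (-1) ^ i * of_nat (K choose i) / pochhammer (x + of_nat i + 1) (Suc K)"
  shows "of_nat (Suc K choose Suc k) * (-1) ^ Suc k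
           / (pochhammer (x + of_nat (Suc k)) (Suc k) * pochhammer (x + of_nat (2 * Suc k) + 1) (K - k))
       = A (Suc k) - A k"
proof (cases "k = K")
  case True
  then show ?thesis by (simp add: A_def binomial_eq_0 add_ac)
next
  case False
  define z where "z = x + of_nat (Suc k)"
  define w where "w = x + of_nat (2 * Suc k)"
  define P where "P = pochhammer z (Suc K)"
  define Q where "Q = pochhammer (z + 1) (Suc K)"
  have z_nz: "z + of_nat j \<noteq> 0" if "j \<le> Suc K" for j
    using nonzero[of "Suc k + j"] that False assms(1) by (simp add: z_def add.assoc)
  have w_nz: "w \<noteq> 0"
    using nonzero[of "2 * Suc k"] False assms(1) by (simp add: w_def)
  have Q_nz: "Q \<noteq> 0"
    unfolding Q_def using z_nz[of "Suc _"] by (auto intro!: pochhammer_nonzero simp: add_ac)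
  have "pochhammer z (Suc k) * w * pochhammer (w + 1) (K - k) = pochhammer z (Suc (Suc K))"
    using pochhammer_split_middle[of "Suc k" "Suc K" x] assms(1) by (simp add: z_def w_def)
  then have denom: "pochhammer z (Suc k) * pochhammer (w + 1) (K - k) = z * Q / w"
    using w_nz by (simp add: Q_def pochhammer_rec field_simps)
  have P_eq: "P = z * Q / (z + of_nat (Suc K))"
    using z_nz[of "Suc K"] pochhammer_rec[of z "Suc K"] pochhammer_rec'[of z "Suc K"]
    by (simp add: P_def Q_def field_simps)
  have binom: "of_nat (Suc K choose Suc k) = (of_nat (K choose Suc k) * z + of_nat (K choose k) * (z + of_nat (Suc K))) / w"
    using choose_Suc_weighted[of K k x] w_nz by (simp add: z_def w_def field_simps)
  have A_Suc: "A (Suc k) = (-1) ^ Suc k * of_nat (K choose Suc k) / Q"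
    and A_k: "A k = (-1) ^ k * of_nat (K choose k) / P"
    by (simp_all add: A_def P_def Q_def z_def add_ac)
  show ?thesis
    unfolding A_Suc A_k z_def[symmetric] w_def[symmetric] denom binom P_eq
    using z_nz[of 0] z_nz[of "Suc K"] Q_nz w_nz by (simp add: field_simps)
qed

lemma sum_alternating_choose_pochhammer:
  fixes x :: "'a::field"
  assumes "\<And>j. 0 < j \<Longrightarrow> j \<le> 2 * K + 1 \<Longrightarrow> x + of_nat j \<noteq> 0"
  shows "(\<Sum>k\<le>Suc K. of_nat (Suc K choose k) * (-1) ^ k
           / (pochhammer (x + of_nat k) k * pochhammer (x + of_nat (2 * k) + 1) (Suc K - k))) = 0"
proof -
  define A where "A i = (-1) ^ i * of_nat (K choose i) / pochhammer (x + of_nat i + 1) (Suc K)" for i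
  have "(\<Sum>k\<le>Suc K. of_nat (Suc K choose k) * (-1) ^ k
           / (pochhammer (x + of_nat k) k * pochhammer (x + of_nat (2 * k) + 1) (Suc K - k)))
      = A 0 + (\<Sum>k<Suc K. A (Suc k) - A k)"
    unfolding sum.atMost_Suc_shift lessThan_Suc_atMost
    using alternating_term_telescoping[OF _ assms, folded A_def] by (simp add: A_def)
  also have "\<dots> = 0"
    unfolding sum_lessThan_telescope by (simp add: A_def binomial_eq_0)
  finally show ?thesis .
qed

lemma sum_by_level:
  fixes g :: "'b \<Rightarrow> 'c::comm_semiring_0"
  assumes "finite S" "finite T" "f ` S \<subseteq> T"
  shows "(\<Sum>i\<in>S. g (f i) * h i) = (\<Sum>s\<in>T. g s * (\<Sum>i\<in>S. if f i = s then h i else 0))"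
proof -
  have "(\<Sum>s\<in>T. g s * (\<Sum>i\<in>S. if f i = s then h i else 0)) = (\<Sum>s\<in>T. \<Sum>i | i \<in> S \<and> f i = s. g (f i) * h i)"
    using assms(1) by (auto simp: sum.inter_filter[symmetric] sum_distrib_left intro!: sum.cong)
  also have "\<dots> = (\<Sum>i\<in>S. g (f i) * h i)"
    by (rule sum.group[OF assms])
  finally show ?thesis ..
qed

lemma psum_Suc: "j \<le> Suc N \<Longrightarrow> psum g j (Suc N) = psum g j N + g (Suc N)"
  unfolding psum_def by simp

lemma psum_fun_upd_beyond: "k < q \<Longrightarrow> psum (g(q := y)) j k = psum g j k"
  unfolding psum_def by (rule sum.cong) auto

lemma psum_Suc_fun_upd: "j \<le> Suc N \<Longrightarrow> psum (g(Suc N := y)) j (Suc N) = psum g j N + y"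
  by (simp add: psum_Suc psum_fun_upd_beyond)

lemma psum_mono: "(\<And>p. p \<in> {j..k} \<Longrightarrow> m p \<le> n p) \<Longrightarrow> psum m j k \<le> psum n j k"
  unfolding psum_def by (rule sum_mono)

lemma mem_box_iff:
  "i \<in> box N lo hi \<longleftrightarrow> (\<forall>p\<in>{1..N}. lo p \<le> i p \<and> i p \<le> hi p) \<and> i \<in> extensional {1..N}"
  unfolding box_def by (auto simp: PiE_iff)

lemma finite_box: "finite (box N lo hi)"
  unfolding box_def by (rule finite_PiE) auto

lemma box_0: "box 0 lo hi = {\<lambda>_. undefined}"
  unfolding box_def by simp

lemma sum_box_Suc:
  "(\<Sum>i\<in>box (Suc N) lo hi. f i) = (\<Sum>y\<in>{lo (Suc N)..hi (Suc N)}. \<Sum>g\<in>box N lo hi. f (g(Suc N := y)))"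
proof -
  have "{1..Suc N} = insert (Suc N) {1..N}" by auto
  then have "box (Suc N) lo hi = (\<lambda>(y, g). g(Suc N := y)) ` ({lo (Suc N)..hi (Suc N)} \<times> box N lo hi)"
    unfolding box_def by (simp add: PiE_insert_eq)
  moreover have "inj_on (\<lambda>(y, g). g(Suc N := y)) ({lo (Suc N)..hi (Suc N)} \<times> box N lo hi)"
    unfolding box_def by (rule inj_combinator) auto
  ultimately show ?thesis
    by (simp add: sum.reindex sum.cartesian_product split_def)
qed

lemma psum_strict_mono:
  assumes "m \<in> extensional {1..N}" "n \<in> extensional {1..N}" "\<forall>p\<in>{1..N}. m p \<le> n p" "m \<noteq> n"
  shows "psum m 1 N < psum n 1 N"
proof -
  obtain p where "m p \<noteq> n p" using \<open>m \<noteq> n\<close> by auto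
  with assms(1,2) have "p \<in> {1..N}" by (metis extensional_arb)
  with assms(3) \<open>m p \<noteq> n p\<close> show ?thesis
    unfolding psum_def by (intro sum_strict_mono_ex1) force+
qed

definition poch_weight :: "nat \<Rightarrow> (nat \<Rightarrow> 'a::comm_semiring_1) \<Rightarrow> (nat \<Rightarrow> nat) \<Rightarrow> (nat \<Rightarrow> nat) \<Rightarrow> 'a" where
  "poch_weight N d m n = (\<Prod>p\<in>{1..N}. pochhammer (of_nat (psum n 1 (p - 1) + psum m 1 p) + d p) (n p - m p))"

text \<open>With d p = |l|_{p+1}^N - a p + omega*, the Pochhammer products in Dcoef m i and Dbar i n are
  poch_weight N d m i and poch_weight N d i n.\<close>

definition chain_weight ::
    "nat \<Rightarrow> (nat \<Rightarrow> 'a::comm_semiring_1) \<Rightarrow> (nat \<Rightarrow> nat) \<Rightarrow> (nat \<Rightarrow> nat) \<Rightarrow> (nat \<Rightarrow> nat) \<Rightarrow> 'a" where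
  "chain_weight N d m i n =
     (\<Prod>p\<in>{1..N}. of_nat ((n p - m p) choose (i p - m p))) * poch_weight N d m i * poch_weight N d i n"

lemma poch_weight_Suc:
  "poch_weight (Suc N) d m n
     = poch_weight N d m n * pochhammer (of_nat (psum n 1 N + psum m 1 (Suc N)) + d (Suc N)) (n (Suc N) - m (Suc N))"
  unfolding poch_weight_def by simp

lemma poch_weight_fun_upd:
  "poch_weight N d (m(Suc N := x)) (n(Suc N := y)) = poch_weight N d m n"
  unfolding poch_weight_def by (rule prod.cong) (auto simp: psum_fun_upd_beyond)

lemma chain_weight_Suc_fun_upd:
  "chain_weight (Suc N) d m (g(Suc N := y)) n = chain_weight N d m g n
     * (of_nat ((n (Suc N) - m (Suc N)) choose (y - m (Suc N)))
        * pochhammer (of_nat (psum g 1 N + psum m 1 (Suc N)) + d (Suc N)) (y - m (Suc N))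
        * pochhammer (of_nat (psum n 1 N + (psum g 1 N + y)) + d (Suc N)) (n (Suc N) - y))"
  using poch_weight_fun_upd[of N d m "m (Suc N)" g y] poch_weight_fun_upd[of N d g y n "n (Suc N)"]
  by (simp add: chain_weight_def poch_weight_Suc psum_Suc_fun_upd psum_fun_upd_beyond algebra_simps)

lemma sum_level_chain_weight_Suc:
  "(\<Sum>i\<in>box (Suc N) m n. if psum i 1 (Suc N) = s then chain_weight (Suc N) d m i n else 0)
   = (\<Sum>y\<in>{m (Suc N)..n (Suc N)}. if y \<le> s then
        (\<Sum>g\<in>box N m n. if psum g 1 N = s - y then chain_weight N d m g n else 0)
        * (of_nat ((n (Suc N) - m (Suc N)) choose (y - m (Suc N)))
           * pochhammer (of_nat (s - y + psum m 1 (Suc N)) + d (Suc N)) (y - m (Suc N))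
           * pochhammer (of_nat (psum n 1 N + s) + d (Suc N)) (n (Suc N) - y))
      else 0)"
  unfolding sum_box_Suc
proof (intro sum.cong refl)
  fix y
  let ?F = "of_nat ((n (Suc N) - m (Suc N)) choose (y - m (Suc N)))
           * pochhammer (of_nat (s - y + psum m 1 (Suc N)) + d (Suc N)) (y - m (Suc N))
           * pochhammer (of_nat (psum n 1 N + s) + d (Suc N)) (n (Suc N) - y)"
  have "(if psum (g(Suc N := y)) 1 (Suc N) = s then chain_weight (Suc N) d m (g(Suc N := y)) n else 0)
      = (if psum g 1 N = s - y then chain_weight N d m g n else 0) * ?F" if "y \<le> s" for g
  proof (cases "psum g 1 N = s - y")
    case True
    then show ?thesis
      using that by (simp only: psum_Suc_fun_upd chain_weight_Suc_fun_upd le_add_diff_inverse2 if_True) simp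
  next
    case False
    then show ?thesis
      using that by (simp add: psum_Suc_fun_upd)
  qed
  then show "(\<Sum>g\<in>box N m n. if psum (g(Suc N := y)) 1 (Suc N) = s then chain_weight (Suc N) d m (g(Suc N := y)) n else 0)
      = (if y \<le> s then (\<Sum>g\<in>box N m n. if psum g 1 N = s - y then chain_weight N d m g n else 0) * ?F else 0)"
    by (auto simp: psum_Suc_fun_upd sum_distrib_right intro!: sum.neutral)
qed

lemma sum_level_chain_weight:
  fixes d :: "nat \<Rightarrow> 'a::comm_ring_1"
  assumes "\<forall>p\<in>{1..N}. m p \<le> n p"
  shows "(\<Sum>i\<in>box N m n. if psum i 1 N = s then chain_weight N d m i n else 0)
       = (if psum m 1 N \<le> s then of_nat ((psum n 1 N - psum m 1 N) choose (s - psum m 1 N)) else 0)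
         * poch_weight N d m n"
  using assms
proof (induction N arbitrary: s)
  case 0
  then show ?case unfolding box_0 by (simp add: psum_def chain_weight_def poch_weight_def binomial_eq_0)
next
  case (Suc N s)
  define r where "r = psum m 1 N"
  define M where "M = psum n 1 N - r"
  have "r \<le> psum n 1 N"
    using Suc.prems unfolding r_def by (intro psum_mono) auto
  then have n_N: "psum n 1 N = M + r" unfolding M_def by simp
  have m_Suc: "psum m 1 (Suc N) = r + m (Suc N)"
    unfolding r_def by (simp add: psum_Suc)
  have n_Suc: "psum n 1 (Suc N) = M + r + n (Suc N)"
    using n_N by (simp add: psum_Suc)
  have lo_hi: "m (Suc N) \<le> n (Suc N)" using Suc.prems by simp
  have "(\<Sum>i\<in>box (Suc N) m n. if psum i 1 (Suc N) = s then chain_weight (Suc N) d m i n else 0)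
      = poch_weight N d m n * (\<Sum>y\<in>{m (Suc N)..n (Suc N)}.
          (if y \<le> s \<and> r \<le> s - y then of_nat (M choose (s - y - r)) else 0)
           * (of_nat ((n (Suc N) - m (Suc N)) choose (y - m (Suc N)))
              * pochhammer (of_nat (s - y + (r + m (Suc N))) + d (Suc N)) (y - m (Suc N))
              * pochhammer (of_nat (M + r + s) + d (Suc N)) (n (Suc N) - y)))"
  proof -
    have IH: "(\<Sum>g\<in>box N m n. if psum g 1 N = t then chain_weight N d m g n else 0)
        = (if r \<le> t then of_nat (M choose (t - r)) else 0) * poch_weight N d m n" for t
      using Suc.IH[of t] Suc.prems unfolding r_def M_def by simp
    show ?thesis
      unfolding sum_level_chain_weight_Suc IH m_Suc n_N
      by (auto simp: sum_distrib_left algebra_simps intro!: sum.cong)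
  qed
  also have "\<dots> = (if psum m 1 (Suc N) \<le> s
        then of_nat ((psum n 1 (Suc N) - psum m 1 (Suc N)) choose (s - psum m 1 (Suc N))) else 0)
      * poch_weight (Suc N) d m n"
  proof (cases "r + m (Suc N) \<le> s")
    case True
    have "psum n 1 (Suc N) - psum m 1 (Suc N) = M + (n (Suc N) - m (Suc N))"
      unfolding m_Suc n_Suc using lo_hi by simp
    with True show ?thesis
      unfolding sum_choose_pochhammer_convolution_shifted[OF lo_hi True] poch_weight_Suc m_Suc n_N
      by (simp add: mult.commute)
  next
    case False
    then show ?thesis
      unfolding m_Suc by (subst sum.neutral) auto
  qed
  finally show ?case .
qed

lemma choose_mult_choose_complement:
  assumes "m \<le> i" "i \<le> n" "n \<le> l"
  shows "((l - i) choose (l - n)) * ((l - m) choose (l - i)) = ((l - m) choose (n - m)) * ((n - m) choose (i - m))"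
proof -
  have "((l - m) choose (l - i)) * ((l - i) choose (l - n))
      = ((l - m) choose (l - n)) * (((l - m) - (l - n)) choose ((l - i) - (l - n)))"
    by (rule choose_mult) (use assms in auto)
  also have "(l - m) - (l - n) = n - m"
    using assms by simp
  also have "(l - i) - (l - n) = n - i"
    using assms by simp
  also have "(l - m) choose (l - n) = (l - m) choose (n - m)"
    using binomial_symmetric[of "l - n" "l - m"] assms by simp
  also have "(n - m) choose (n - i) = (n - m) choose (i - m)"
    using binomial_symmetric[of "n - i" "n - m"] assms by simp
  finally show ?thesis by (simp add: mult.commute)
qed

lemma Dbar_mult_Dcoef:
  assumes "\<forall>p\<in>{1..N}. m p \<le> i p \<and> i p \<le> n p \<and> n p \<le> l p"
  shows "Dbar N l a w i n * Dcoef N l a w m i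
    = (-1) ^ (psum i 1 N - psum m 1 N)
        / (pochhammer (of_nat (psum i 1 N + psum m 1 N) + w) (psum i 1 N - psum m 1 N)
           * pochhammer (of_nat (2 * psum i 1 N) + w + 1) (psum n 1 N - psum i 1 N))
      * (\<Prod>p\<in>{1..N}. of_nat ((l p - m p) choose (n p - m p)))
      * chain_weight N (\<lambda>p. of_nat (psum l (p + 1) N) - a p + w) m i n"
proof -
  define d where "d p = of_nat (psum l (p + 1) N) - a p + w" for p
  have factor: "(of_nat ((l p - i p) choose (l p - n p))
          * pochhammer (of_nat (psum n 1 (p - 1) + psum i 1 p + psum l (p + 1) N) - a p + w) (n p - i p))
        * (of_nat ((l p - m p) choose (l p - i p))
          * pochhammer (of_nat (psum i 1 (p - 1) + psum m 1 p + psum l (p + 1) N) - a p + w) (i p - m p))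
      = of_nat ((l p - m p) choose (n p - m p)) * (of_nat ((n p - m p) choose (i p - m p))
        * pochhammer (of_nat (psum i 1 (p - 1) + psum m 1 p) + d p) (i p - m p)
        * pochhammer (of_nat (psum n 1 (p - 1) + psum i 1 p) + d p) (n p - i p))"
    if "p \<in> {1..N}" for p
  proof -
    have "of_nat ((l p - i p) choose (l p - n p)) * of_nat ((l p - m p) choose (l p - i p))
        = (of_nat ((l p - m p) choose (n p - m p)) * of_nat ((n p - m p) choose (i p - m p)) :: complex)"
      using choose_mult_choose_complement[of "m p" "i p" "n p" "l p"] assms that by (metis of_nat_mult)
    then show ?thesis by (simp add: d_def algebra_simps)
  qed
  have "(\<Prod>p\<in>{1..N}. of_nat ((l p - i p) choose (l p - n p))
          * pochhammer (of_nat (psum n 1 (p - 1) + psum i 1 p + psum l (p + 1) N) - a p + w) (n p - i p))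
      * (\<Prod>p\<in>{1..N}. of_nat ((l p - m p) choose (l p - i p))
          * pochhammer (of_nat (psum i 1 (p - 1) + psum m 1 p + psum l (p + 1) N) - a p + w) (i p - m p))
      = (\<Prod>p\<in>{1..N}. of_nat ((l p - m p) choose (n p - m p))) * chain_weight N d m i n"
    unfolding chain_weight_def poch_weight_def prod.distrib[symmetric]
    by (rule prod.cong[OF refl factor])
  then show ?thesis
    unfolding Dbar_def Dcoef_def d_def[abs_def]
    by (simp add: divide_inverse inverse_mult_distrib mult_ac)
qed

lemma sum_Dbar_mult_Dcoef_by_level:
  fixes m n l :: "nat \<Rightarrow> nat" and w :: complex
  assumes "\<forall>p\<in>{1..N}. m p \<le> n p \<and> n p \<le> l p"
  defines "r \<equiv> psum m 1 N" and "t \<equiv> psum n 1 N" and "x \<equiv> of_nat (2 * psum m 1 N) + w"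
  shows "(\<Sum>i\<in>box N m n. Dbar N l a w i n * Dcoef N l a w m i)
       = (\<Prod>p\<in>{1..N}. of_nat ((l p - m p) choose (n p - m p)))
         * poch_weight N (\<lambda>p. of_nat (psum l (p + 1) N) - a p + w) m n
         * (\<Sum>k\<le>t - r. of_nat ((t - r) choose k) * (-1) ^ k
              / (pochhammer (x + of_nat k) k * pochhammer (x + of_nat (2 * k) + 1) (t - r - k)))"
proof -
  define B where "B = (\<Prod>p\<in>{1..N}. of_nat ((l p - m p) choose (n p - m p)) :: complex)"
  define d where "d p = of_nat (psum l (p + 1) N) - a p + w" for p
  define g where "g s = (-1) ^ (s - r) / (pochhammer (of_nat (s + r) + w) (s - r)
      * pochhammer (of_nat (2 * s) + w + 1) (t - s))" for s
  have level: "r \<le> psum i 1 N \<and> psum i 1 N \<le> t" if "i \<in> box N m n" for i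
    using that unfolding r_def t_def by (auto simp: mem_box_iff intro!: psum_mono)
  have "(\<Sum>i\<in>box N m n. Dbar N l a w i n * Dcoef N l a w m i) = B * (\<Sum>i\<in>box N m n. g (psum i 1 N) * chain_weight N d m i n)"
    unfolding sum_distrib_left
    by (intro sum.cong refl) (use assms(1) in \<open>auto simp: Dbar_mult_Dcoef mem_box_iff B_def d_def[abs_def] g_def r_def t_def\<close>)
  also have "(\<Sum>i\<in>box N m n. g (psum i 1 N) * chain_weight N d m i n)
      = (\<Sum>s\<in>{r..t}. g s * (\<Sum>i\<in>box N m n. if psum i 1 N = s then chain_weight N d m i n else 0))"
    using level by (intro sum_by_level finite_box) auto
  also have "\<dots> = poch_weight N d m n * (\<Sum>s\<in>{r..t}. of_nat ((t - r) choose (s - r)) * g s)"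
  proof -
    have "(\<Sum>i\<in>box N m n. if psum i 1 N = s then chain_weight N d m i n else 0)
        = (if r \<le> s then of_nat ((t - r) choose (s - r)) else 0) * poch_weight N d m n" for s
      unfolding r_def t_def using assms(1) by (intro sum_level_chain_weight) simp
    then show ?thesis
      by (auto simp: sum_distrib_left mult_ac intro!: sum.cong)
  qed
  also have "(\<Sum>s\<in>{r..t}. of_nat ((t - r) choose (s - r)) * g s)
      = (\<Sum>k\<le>t - r. of_nat ((t - r) choose k) * (-1) ^ k
              / (pochhammer (x + of_nat k) k * pochhammer (x + of_nat (2 * k) + 1) (t - r - k)))"
  proof -
    have "r \<le> t" using assms(1) unfolding r_def t_def by (auto intro!: psum_mono)
    show ?thesis
      unfolding sum.atLeastAtMost_shift_0[OF \<open>r \<le> t\<close>] atLeast0AtMost comp_def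
    proof (intro sum.cong refl)
      fix k
      have "of_nat (r + k + r) + w = x + of_nat k" and "of_nat (2 * (r + k)) + w + 1 = x + of_nat (2 * k) + 1"
        by (simp_all add: x_def r_def)
      moreover have "t - (r + k) = t - r - k" and "r + k - r = k"
        by simp_all
      ultimately show "of_nat ((t - r) choose (r + k - r)) * g (r + k)
          = of_nat ((t - r) choose k) * (-1) ^ k
              / (pochhammer (x + of_nat k) k * pochhammer (x + of_nat (2 * k) + 1) (t - r - k))"
        unfolding g_def by (simp only:) simp
    qed
  qed
  finally show ?thesis
    unfolding B_def d_def[abs_def] by (simp only: mult.assoc)
qed

lemma sum_Dbar_mult_Dcoef:
  fixes w :: complex
  assumes "n \<in> box N (\<lambda>_. 0) l" and "m \<in> box N (\<lambda>_. 0) n"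
    and nonzero: "\<And>q. 0 < q \<Longrightarrow> q < 2 * psum n 1 N \<Longrightarrow> w + of_nat q \<noteq> 0"
  shows "(\<Sum>i\<in>box N m n. Dbar N l a w i n * Dcoef N l a w m i) = (if m = n then 1 else 0)"
proof -
  have bounds: "\<forall>p\<in>{1..N}. m p \<le> n p \<and> n p \<le> l p"
    using assms(1,2) by (auto simp: mem_box_iff)
  show ?thesis
  proof (cases "m = n")
    case True
    then show ?thesis
      unfolding sum_Dbar_mult_Dcoef_by_level[OF bounds] by (simp add: poch_weight_def)
  next
    case False
    then have "psum m 1 N < psum n 1 N"
      using assms(1,2) bounds by (intro psum_strict_mono) (auto simp: mem_box_iff)
    then obtain K where K: "psum n 1 N - psum m 1 N = Suc K"
      by (metis Suc_diff_Suc)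
    have "(\<Sum>k\<le>Suc K. of_nat (Suc K choose k) * (-1) ^ k
        / (pochhammer (of_nat (2 * psum m 1 N) + w + of_nat k) k
           * pochhammer (of_nat (2 * psum m 1 N) + w + of_nat (2 * k) + 1) (Suc K - k))) = 0"
    proof (rule sum_alternating_choose_pochhammer)
      fix j :: nat assume "0 < j" "j \<le> 2 * K + 1"
      then have "0 < 2 * psum m 1 N + j" and "2 * psum m 1 N + j < 2 * psum n 1 N"
        using K by linarith+
      then have "w + of_nat (2 * psum m 1 N + j) \<noteq> 0"
        by (rule nonzero)
      then show "of_nat (2 * psum m 1 N) + w + of_nat j \<noteq> 0"
        by (simp add: add_ac)
    qed
    then show ?thesis
      unfolding sum_Dbar_mult_Dcoef_by_level[OF bounds] K using False by simp
  qed
qed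

lemma sum_fun_apply: "(\<Sum>x\<in>A. f x) y = (\<Sum>x\<in>A. f x y)"
  by (induct A rule: infinite_finite_induct) auto

lemma Vnew_apply: "Vnew N l a w i m = (if m \<in> box N (\<lambda>_. 0) i then Dcoef N l a w m i else 0)"
  by (simp add: Vnew_def cscale_def Vbasis_def sum_fun_apply finite_box if_distrib cong: if_cong)

lemma sum_cscale_Dbar_Vnew_apply:
  "(\<Sum>i\<in>box N (\<lambda>_. 0) n. cscale (Dbar N l a w i n) (Vnew N l a w i)) m
   = (if m \<in> box N (\<lambda>_. 0) n then \<Sum>i\<in>box N m n. Dbar N l a w i n * Dcoef N l a w m i else 0)"
proof -
  have "(\<Sum>i\<in>box N (\<lambda>_. 0) n. cscale (Dbar N l a w i n) (Vnew N l a w i)) m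
      = (\<Sum>i\<in>{i \<in> box N (\<lambda>_. 0) n. m \<in> box N (\<lambda>_. 0) i}. Dbar N l a w i n * Dcoef N l a w m i)"
    by (simp add: sum_fun_apply cscale_def Vnew_apply sum.inter_filter finite_box if_distrib cong: if_cong)
  moreover have "{i \<in> box N (\<lambda>_. 0) n. m \<in> box N (\<lambda>_. 0) i}
      = (if m \<in> box N (\<lambda>_. 0) n then box N m n else {})"
    by (auto simp: mem_box_iff) force+
  ultimately show ?thesis by simp
qed

lemma mem_box_self: "n \<in> box N lo hi \<Longrightarrow> n \<in> box N (\<lambda>_. 0) n"
  by (simp add: mem_box_iff)

theorem mainTheorem5:
  fixes N :: nat and l :: "nat \<Rightarrow> nat"
    and \<theta>0 \<theta>0s h hs \<omega> \<omega>s :: complex and a :: "nat \<Rightarrow> complex"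
    and n :: "nat \<Rightarrow> nat"
  assumes "N \<ge> 1"
    and "h \<noteq> 0" and "hs \<noteq> 0"
    and "\<forall>k::int. - 2 * int (psum l 1 N) + 1 \<le> k \<and> k \<le> -1 \<longrightarrow> \<omega> \<noteq> of_int k"
    and "\<forall>k::int. - 2 * int (psum l 1 N) + 1 \<le> k \<and> k \<le> -1 \<longrightarrow> \<omega>s \<noteq> of_int k"
    and "\<forall>i\<in>{1..N}. \<forall>k::int. - int (l i) \<le> k \<and> k \<le> -1 \<longrightarrow>
           a i \<noteq> of_int k \<and> a i + \<omega> - \<omega>s \<noteq> of_int k
           \<and> a i - of_nat (psum l 1 N) - \<omega>s \<noteq> of_int k
           \<and> a i + of_nat (psum l 1 N) + \<omega> \<noteq> of_int k"
    and "\<forall>i\<in>{1..N}. \<forall>j\<in>{1..N}. \<forall>ei\<in>{1, -1}. \<forall>ej\<in>{1, -1}.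
           general_position (Sset ei (l i) (a i) \<omega> \<omega>s) (Sset ej (l j) (a j) \<omega> \<omega>s)"
    and "n \<in> box N (\<lambda>_. 0) l"
  shows "Vbasis n = (\<Sum>i\<in>box N (\<lambda>_. 0) n. cscale (Dbar N l a \<omega>s i n) (Vnew N l a \<omega>s i))"
proof (rule ext)
  fix m
  have nonzero: "\<omega>s + of_nat q \<noteq> 0" if "0 < q" "q < 2 * psum n 1 N" for q
  proof
    assume "\<omega>s + of_nat q = 0"
    then have "\<omega>s = of_int (- int q)" by (simp add: eq_neg_iff_add_eq_0)
    moreover have "psum n 1 N \<le> psum l 1 N"
      using assms(8) by (intro psum_mono) (simp add: mem_box_iff)
    with that have "- 2 * int (psum l 1 N) + 1 \<le> - int q \<and> - int q \<le> -1"
      by linarith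
    ultimately show False
      using assms(5) by blast
  qed
  show "Vbasis n m = (\<Sum>i\<in>box N (\<lambda>_. 0) n. cscale (Dbar N l a \<omega>s i n) (Vnew N l a \<omega>s i)) m"
    unfolding sum_cscale_Dbar_Vnew_apply
    using sum_Dbar_mult_Dcoef[OF assms(8) _ nonzero] mem_box_self[OF assms(8)]
    by (auto simp: Vbasis_def)
qed

end
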